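(* (i) If $z_0=(x_0,y_0)$ with $y_0\ne0$ has a $\mathbf{W}$-orbit defined for all $k$ and converging to $p_0$, then there are constants $c,C>0$ such that $c|y_k|^2\le|y_{k+1}|\le C|y_k|^2$ for all $k$, where $z_k=(x_k,y_k)$; i.e. convergence is strictly quadratic. (ii) If $z_0\in R$ with $y_0\neq 0$ has a $\mathbf{W}$-orbit defined for all $k$ and converging to a point $(x_*,0)$ with $x_*\neq 2$, then there are constants $c,C>0$ such that $c|y_k|^3\le|y_{k+1}|\le C|y_k|^3$ for all $k$; i.e. convergence is strictly cubic.
   Context: For $x>0$, $y\in\mathbb{R}$ let $r_1^2=4+x^2+4x^2y^2$, $\Delta=((x+2)^2+8x^2y^2)((x-2)^2+8x^2y^2)$ and $\omega_\pm(x,y)=\frac{x^2-4\pm\sqrt{\Delta}}{2r_1^2}$. Let $p_0=(2,0)$, $R=\{(x,y): x>0,\ 4-4y^2-x^2y^2-8x^2y^4\ge 0\}$, $R_+=R\cap((0,2]\times\mathbb{R})$, $R_-=R\cap([2,\infty)\times\mathbb{R})$, $r$ the line $x=2$. $\mathbf{W}_\pm(x,y)=\left(\frac{1+\omega_\pm}{1-\omega_\pm}x,\ \frac{|\omega_\pm|}{1+\omega_\pm}y\right)$ on $R_\pm$; $\mathbf{W}=\mathbf{W}_+$ for $x<2$, $\mathbf{W}=\mathbf{W}_-$ for $x>2$, $\mathbf{W}(p_0)=p_0$. The $\mathbf{W}$-orbit of $z_0$ is $z_{k+1}=\mathbf{W}(z_k)$, defined as long as no $z_k$ lies on $r\setminus\{p_0\}$.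 *)

theory Defs
  imports "HOL-Analysis.Analysis"
begin

definition r1sq :: "real \<Rightarrow> real \<Rightarrow> real" where
  "r1sq x y = 4 + x^2 + 4 * x^2 * y^2"

definition Delta :: "real \<Rightarrow> real \<Rightarrow> real" where
  "Delta x y = ((x + 2)^2 + 8 * x^2 * y^2) * ((x - 2)^2 + 8 * x^2 * y^2)"

definition omega_plus :: "real \<Rightarrow> real \<Rightarrow> real" where
  "omega_plus x y = (x^2 - 4 + sqrt (Delta x y)) / (2 * r1sq x y)"

definition omega_minus :: "real \<Rightarrow> real \<Rightarrow> real" where
  "omega_minus x y = (x^2 - 4 - sqrt (Delta x y)) / (2 * r1sq x y)"

definition p0 :: "real \<times> real" where
  "p0 = (2, 0)"

definition regionR :: "(real \<times> real) set" where
  "regionR = {(x, y). x > 0 \<and> 4 - 4 * y^2 - x^2 * y^2 - 8 * x^2 * y^4 \<ge> 0}"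

definition W_gen :: "(real \<Rightarrow> real \<Rightarrow> real) \<Rightarrow> real \<times> real \<Rightarrow> real \<times> real" where
  "W_gen om z = (case z of (x, y) \<Rightarrow>
      ((1 + om x y) / (1 - om x y) * x, \<bar>om x y\<bar> / (1 + om x y) * y))"

definition W_plus :: "real \<times> real \<Rightarrow> real \<times> real" where
  "W_plus = W_gen omega_plus"

definition W_minus :: "real \<times> real \<Rightarrow> real \<times> real" where
  "W_minus = W_gen omega_minus"

text \<open>The map W: W_plus for x < 2, W_minus for x > 2, W p0 = p0.
  Its domain is R minus the line x = 2 except p0; outside that domain the value is irrelevant.\<close>
definition W :: "real \<times> real \<Rightarrow> real \<times> real" where
  "W z = (if z = p0 then p0 else if fst z < 2 then W_plus z else W_minus z)"

definition W_domain :: "(real \<times> real) set" where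
  "W_domain = regionR - {z. fst z = 2 \<and> z \<noteq> p0}"

definition W_orbit :: "real \<times> real \<Rightarrow> nat \<Rightarrow> real \<times> real" where
  "W_orbit z0 k = (W ^^ k) z0"

definition orbit_defined :: "real \<times> real \<Rightarrow> bool" where
  "orbit_defined z0 \<longleftrightarrow> (\<forall>k. W_orbit z0 k \<in> W_domain)"

end

theory Submission
  imports Defs
begin

(* Write omega for the multiplier selected by W, so that y' = |omega| / (1 + omega) * y, and
   E = Delta - (x^2 - 4)^2 = 16 x^2 y^2 (x^2 + 4) + 64 x^4 y^4.  Rationalising the numerator of
   omega_plus/minus gives |omega| * 2 r1^2 (|x^2 - 4| + sqrt Delta) = E, so |omega| is comparable
   to E / (|x^2 - 4| + sqrt E), where E is comparable to y^2.
   Away from x = 2 the denominator stays bounded below, so |omega| ~ y^2 and y' ~ y^3.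
   Near p0 one always has |omega| <= C |y|, whence y' <= C y^2; the matching lower bound needs
   |x_k - 2| = O(|y_k|).  That holds because otherwise x_k moves by only O(y_k^2 / |x_k - 2|)
   per step while y_k decays geometrically, so x_k could not reach 2. *)

definition omega :: "real \<Rightarrow> real \<Rightarrow> real" where
  "omega x y = (if x < 2 then omega_plus x y else omega_minus x y)"

definition Delta_excess :: "real \<Rightarrow> real \<Rightarrow> real" where
  "Delta_excess x y = 16 * x^2 * y^2 * (x^2 + 4) + 64 * x^4 * y^4"

lemma Delta_excess_nonneg: "Delta_excess x y \<ge> 0"
  unfolding Delta_excess_def by (simp add: zero_le_even_power)

lemma Delta_eq_excess: "Delta x y = (x^2 - 4)^2 + Delta_excess x y"
  unfolding Delta_def Delta_excess_def by (simp add: power2_eq_square power4_eq_xxxx algebra_simps)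

lemma Delta_excess_ge: "64 * x^2 * y^2 \<le> Delta_excess x y"
proof -
  have "64 * x^2 * y^2 \<le> 16 * x^2 * y^2 * (x^2 + 4)"
    by (simp add: algebra_simps zero_le_mult_iff)
  then show ?thesis
    unfolding Delta_excess_def by (simp add: add_increasing2 zero_le_even_power)
qed

lemma Delta_excess_pos: "x \<noteq> 0 \<Longrightarrow> y \<noteq> 0 \<Longrightarrow> Delta_excess x y > 0"
  by (rule order.strict_trans2[OF _ Delta_excess_ge]) simp

lemma Delta_excess_le:
  assumes "\<bar>x\<bar> \<le> M" "\<bar>y\<bar> \<le> 1"
  shows "Delta_excess x y \<le> Delta_excess M 1 * y^2"
proof -
  have x2: "x^2 \<le> M^2" and x4: "x^4 \<le> M^4"
    using power_mono[OF assms(1) abs_ge_zero, of 2] power_mono[OF assms(1) abs_ge_zero, of 4]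
    by (simp_all add: power_even_abs_numeral)
  have "y^2 * y^2 \<le> 1 * y^2"
    using power_mono[OF assms(2) abs_ge_zero, of 2] by (intro mult_right_mono) auto
  then have y4: "y^4 \<le> y^2"
    by (simp add: power4_eq_xxxx power2_eq_square)
  have "16 * x^2 * y^2 * (x^2 + 4) \<le> 16 * M^2 * y^2 * (M^2 + 4)"
    using x2 by (intro mult_mono) (auto simp: zero_le_mult_iff)
  moreover have "64 * x^4 * y^4 \<le> 64 * M^4 * y^2"
    using x4 y4 by (intro mult_mono) (auto simp: zero_le_mult_iff)
  ultimately show ?thesis
    unfolding Delta_excess_def by (simp add: algebra_simps)
qed

lemma r1sq_ge_4: "r1sq x y \<ge> 4"
  unfolding r1sq_def by (simp add: zero_le_mult_iff)

lemma r1sq_le: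
  assumes "\<bar>x\<bar> \<le> M" "\<bar>y\<bar> \<le> 1"
  shows "r1sq x y \<le> 4 + 5 * M^2"
proof -
  have x2: "x^2 \<le> M^2" and y2: "y^2 \<le> 1"
    using power_mono[OF assms(1) abs_ge_zero, of 2] power_mono[OF assms(2) abs_ge_zero, of 2]
    by simp_all
  then have "x^2 * y^2 \<le> M^2 * 1"
    by (intro mult_mono) auto
  then show ?thesis
    unfolding r1sq_def using x2 by simp
qed

lemma W_Pair_eq:
  "W (x, y) = ((1 + omega x y) / (1 - omega x y) * x, \<bar>omega x y\<bar> / (1 + omega x y) * y)"
proof (cases "(x, y) = p0")
  case True
  then have "x = 2" "y = 0"
    by (auto simp: p0_def)
  with True show ?thesis
    by (simp add: W_def omega_def omega_minus_def Delta_def p0_def)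
next
  case False
  then show ?thesis
    by (auto simp: W_def omega_def W_plus_def W_minus_def W_gen_def)
qed

lemma abs_square_minus_4_eq: "\<bar>(x::real)^2 - 4\<bar> = \<bar>x - 2\<bar> * \<bar>x + 2\<bar>"
proof -
  have "x^2 - 4 = (x - 2) * (x + 2)"
    by (simp add: algebra_simps power2_eq_square)
  then show ?thesis
    by (simp add: abs_mult)
qed

lemma abs_square_minus_4_le_sqrt_Delta: "\<bar>x^2 - 4\<bar> \<le> sqrt (Delta x y)"
  using real_sqrt_le_mono[of "(x^2 - 4)^2" "Delta x y"]
  by (simp add: Delta_eq_excess Delta_excess_nonneg)

text \<open>Rationalising the numerator of \<open>\<omega>\<^sub>\<plusminus>\<close>: the branch chosen by \<^const>\<open>W\<close>
  is the one whose numerator is the difference of \<open>\<surd>\<Delta>\<close> and \<open>\<bar>x\<^sup>2 - 4\<bar>\<close>.\<close>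
lemma abs_omega_identity:
  assumes "x > 0"
  shows "\<bar>omega x y\<bar> * (2 * r1sq x y * (\<bar>x^2 - 4\<bar> + sqrt (Delta x y))) = Delta_excess x y"
proof -
  define s where "s = sqrt (Delta x y)"
  define a where "a = \<bar>x^2 - 4\<bar>"
  have s2: "s^2 = a^2 + Delta_excess x y"
    using Delta_eq_excess[of x y] Delta_excess_nonneg[of x y] by (simp add: s_def a_def)
  have sa: "a \<le> s"
    unfolding a_def s_def by (rule abs_square_minus_4_le_sqrt_Delta)
  have "\<bar>omega x y\<bar> * (2 * r1sq x y) = s - a"
  proof (cases "x < 2")
    case True
    then have "x^2 < 2^2"
      using assms by (intro power_strict_mono) auto
    with True show ?thesis
      using sa r1sq_ge_4[of x y] by (simp add: omega_def omega_plus_def s_def a_def)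
  next
    case False
    then have "2^2 \<le> x^2"
      by (intro power_mono) auto
    with False show ?thesis
      using sa r1sq_ge_4[of x y]
      by (simp add: omega_def omega_minus_def s_def a_def abs_div_pos abs_minus_commute)
  qed
  then have "\<bar>omega x y\<bar> * (2 * r1sq x y * (a + s)) = (s - a) * (s + a)"
    by (metis add.commute mult.assoc)
  also have "\<dots> = Delta_excess x y"
    using s2 by (simp add: algebra_simps power2_eq_square)
  finally show ?thesis
    by (simp add: s_def a_def)
qed

lemma omega_nonneg:
  assumes "0 < x" "x < 2"
  shows "omega x y \<ge> 0"
proof -
  have "x^2 < 2^2"
    using assms by (intro power_strict_mono) auto
  then show ?thesis
    using assms abs_square_minus_4_le_sqrt_Delta[of x y] r1sq_ge_4[of x y]
    by (simp add: omega_def omega_plus_def)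
qed

lemma abs_omega_bounds:
  assumes "x > 0"
  shows "\<bar>omega x y\<bar> * (8 * (\<bar>x^2 - 4\<bar> + sqrt (Delta_excess x y))) \<le> Delta_excess x y"
    and "Delta_excess x y \<le> \<bar>omega x y\<bar> * (2 * r1sq x y * (2 * \<bar>x^2 - 4\<bar> + sqrt (Delta_excess x y)))"
proof -
  have "sqrt (Delta_excess x y) \<le> sqrt (Delta x y)"
    by (intro real_sqrt_le_mono) (simp add: Delta_eq_excess)
  then have "8 * (\<bar>x^2 - 4\<bar> + sqrt (Delta_excess x y))
      \<le> 2 * r1sq x y * (\<bar>x^2 - 4\<bar> + sqrt (Delta x y))"
    using r1sq_ge_4[of x y] Delta_excess_nonneg[of x y] by (intro mult_mono) auto
  then show "\<bar>omega x y\<bar> * (8 * (\<bar>x^2 - 4\<bar> + sqrt (Delta_excess x y))) \<le> Delta_excess x y"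
    using abs_omega_identity[OF assms, of y] by (metis abs_ge_zero mult_left_mono)
  have "Delta x y \<le> (\<bar>x^2 - 4\<bar> + sqrt (Delta_excess x y))^2"
    using Delta_excess_nonneg[of x y] by (simp add: Delta_eq_excess power2_sum)
  then have "sqrt (Delta x y) \<le> \<bar>x^2 - 4\<bar> + sqrt (Delta_excess x y)"
    using real_sqrt_le_mono Delta_excess_nonneg[of x y] by fastforce
  then have "2 * r1sq x y * (\<bar>x^2 - 4\<bar> + sqrt (Delta x y))
      \<le> 2 * r1sq x y * (2 * \<bar>x^2 - 4\<bar> + sqrt (Delta_excess x y))"
    using r1sq_ge_4[of x y] by (intro mult_left_mono) auto
  then show "Delta_excess x y
      \<le> \<bar>omega x y\<bar> * (2 * r1sq x y * (2 * \<bar>x^2 - 4\<bar> + sqrt (Delta_excess x y)))"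
    using abs_omega_identity[OF assms, of y] by (metis abs_ge_zero mult_left_mono)
qed

lemma abs_omega_le_linear:
  assumes "0 < x" "x \<le> M" "\<bar>y\<bar> \<le> 1" "y \<noteq> 0"
  shows "8 * \<bar>omega x y\<bar> \<le> sqrt (Delta_excess M 1) * \<bar>y\<bar>"
proof -
  define e where "e = sqrt (Delta_excess x y)"
  have e_pos: "e > 0"
    using Delta_excess_pos[of x y] assms by (simp add: e_def)
  have "(8 * \<bar>omega x y\<bar>) * e \<le> \<bar>omega x y\<bar> * (8 * (\<bar>x^2 - 4\<bar> + e))"
    by (simp add: algebra_simps)
  also have "\<dots> \<le> e * e"
    using abs_omega_bounds(1)[OF assms(1), of y] Delta_excess_nonneg[of x y] by (simp add: e_def)
  finally have "8 * \<bar>omega x y\<bar> \<le> e"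
    using e_pos by simp
  also have "e \<le> sqrt (Delta_excess M 1 * y^2)"
    unfolding e_def using assms by (intro real_sqrt_le_mono Delta_excess_le) auto
  finally show ?thesis
    by (simp add: real_sqrt_mult)
qed

lemma abs_omega_mult_gap_le:
  assumes "0 < x" "x \<le> M" "\<bar>y\<bar> \<le> 1"
  shows "8 * \<bar>omega x y\<bar> * \<bar>x^2 - 4\<bar> \<le> Delta_excess M 1 * y^2"
proof -
  have "8 * \<bar>omega x y\<bar> * \<bar>x^2 - 4\<bar>
      \<le> \<bar>omega x y\<bar> * (8 * (\<bar>x^2 - 4\<bar> + sqrt (Delta_excess x y)))"
    using Delta_excess_nonneg[of x y] by (simp add: algebra_simps)
  also have "\<dots> \<le> Delta_excess x y"
    using abs_omega_bounds(1)[OF assms(1)] .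
  also have "\<dots> \<le> Delta_excess M 1 * y^2"
    using assms by (intro Delta_excess_le) auto
  finally show ?thesis .
qed

lemma abs_omega_ge:
  assumes "0 < m" "m \<le> x" "x \<le> M" "\<bar>y\<bar> \<le> 1"
  shows "64 * m^2 * y^2
    \<le> \<bar>omega x y\<bar> * (2 * (4 + 5 * M^2) * (2 * \<bar>x^2 - 4\<bar> + sqrt (Delta_excess M 1) * \<bar>y\<bar>))"
proof -
  have x: "0 < x" "\<bar>x\<bar> \<le> M"
    using assms by auto
  have "64 * m^2 * y^2 \<le> 64 * x^2 * y^2"
    using assms by (intro mult_right_mono mult_left_mono power_mono) auto
  also have "\<dots> \<le> Delta_excess x y"
    by (rule Delta_excess_ge)
  also have "\<dots> \<le> \<bar>omega x y\<bar> * (2 * r1sq x y * (2 * \<bar>x^2 - 4\<bar> + sqrt (Delta_excess x y)))"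
    using abs_omega_bounds(2)[OF x(1)] .
  also have "\<dots> \<le> \<bar>omega x y\<bar> * (2 * (4 + 5 * M^2) * (2 * \<bar>x^2 - 4\<bar> + sqrt (Delta_excess M 1) * \<bar>y\<bar>))"
  proof -
    have "sqrt (Delta_excess x y) \<le> sqrt (Delta_excess M 1 * y^2)"
      using x assms(4) by (intro real_sqrt_le_mono Delta_excess_le)
    then have "2 * \<bar>x^2 - 4\<bar> + sqrt (Delta_excess x y) \<le> 2 * \<bar>x^2 - 4\<bar> + sqrt (Delta_excess M 1) * \<bar>y\<bar>"
      by (simp add: real_sqrt_mult)
    then show ?thesis
      using r1sq_le[OF x(2) assms(4)] r1sq_ge_4[of x y] Delta_excess_nonneg[of x y]
      by (intro mult_left_mono mult_mono) auto
  qed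
  finally show ?thesis .
qed

lemma Delta_excess_3_1: "Delta_excess 3 1 = 84^2"
  by (simp add: Delta_excess_def)

lemma abs_omega_ge_linear_near_2:
  assumes x: "1 \<le> x" "x \<le> 3" and y: "\<bar>y\<bar> \<le> 1" "y \<noteq> 0"
    and close: "\<bar>x - 2\<bar> \<le> 146 * \<bar>y\<bar>"
  shows "\<bar>y\<bar> / 2400 \<le> \<bar>omega x y\<bar>"
proof -
  have "\<bar>x^2 - 4\<bar> \<le> 146 * \<bar>y\<bar> * 5"
    unfolding abs_square_minus_4_eq using close x by (intro mult_mono) auto
  then have "2 * \<bar>x^2 - 4\<bar> + 84 * \<bar>y\<bar> \<le> 1544 * \<bar>y\<bar>"
    by simp
  have "64 * 1^2 * y^2 \<le> \<bar>omega x y\<bar> * (2 * (4 + 5 * 3^2) * (2 * \<bar>x^2 - 4\<bar> + sqrt (84^2) * \<bar>y\<bar>))"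
    using abs_omega_ge[of 1 x 3 y] x y unfolding Delta_excess_3_1 by simp
  also have "\<dots> \<le> \<bar>omega x y\<bar> * (98 * (1544 * \<bar>y\<bar>))"
    using \<open>2 * \<bar>x^2 - 4\<bar> + 84 * \<bar>y\<bar> \<le> 1544 * \<bar>y\<bar>\<close> by (intro mult_left_mono) auto
  finally have "\<bar>y\<bar> * (64 * \<bar>y\<bar>) \<le> \<bar>y\<bar> * (151312 * \<bar>omega x y\<bar>)"
    by (simp add: power2_eq_square algebra_simps)
  then show ?thesis
    using y by simp
qed

lemma abs_omega_le_quadratic:
  assumes x: "0 < x" "x \<le> M" and gap: "0 < g" "g \<le> \<bar>x - 2\<bar>" and y: "\<bar>y\<bar> \<le> 1"
  shows "\<bar>omega x y\<bar> \<le> Delta_excess M 1 * y^2 / (16 * g)"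
proof -
  have "8 * \<bar>omega x y\<bar> * (g * 2) \<le> 8 * \<bar>omega x y\<bar> * \<bar>x^2 - 4\<bar>"
    unfolding abs_square_minus_4_eq using x gap by (intro mult_left_mono mult_mono) auto
  also have "\<dots> \<le> Delta_excess M 1 * y^2"
    using abs_omega_mult_gap_le[OF x y] .
  finally show ?thesis
    using gap by (simp add: field_simps)
qed

lemma abs_omega_ge_quadratic:
  assumes x: "0 < m" "m \<le> x" "x \<le> M" and y: "\<bar>y\<bar> \<le> 1"
  shows "64 * m^2 * y^2
    \<le> \<bar>omega x y\<bar> * (2 * (4 + 5 * M^2) * (2 * (M^2 + 4) + sqrt (Delta_excess M 1)))"
proof -
  define E where "E = Delta_excess M 1"
  have "x^2 \<le> M^2"
    using x by (intro power_mono) auto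
  then have "\<bar>x^2 - 4\<bar> \<le> M^2 + 4"
    using zero_le_power2[of x] by linarith
  moreover have "sqrt E * \<bar>y\<bar> \<le> sqrt E"
    using y Delta_excess_nonneg by (simp add: E_def mult_left_le)
  ultimately have "2 * (4 + 5 * M^2) * (2 * \<bar>x^2 - 4\<bar> + sqrt E * \<bar>y\<bar>)
      \<le> 2 * (4 + 5 * M^2) * (2 * (M^2 + 4) + sqrt E)"
    by (intro mult_left_mono) auto
  then show ?thesis
    using abs_omega_ge[OF x y] unfolding E_def
    by (meson abs_ge_zero mult_left_mono order_trans)
qed

lemma W_gen_fst_step_le:
  fixes w x :: real
  assumes "\<bar>w\<bar> \<le> 1/2"
  shows "\<bar>(1 + w) / (1 - w) * x - x\<bar> \<le> 4 * \<bar>w\<bar> * \<bar>x\<bar>"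
proof -
  have w: "1 - w \<ge> 1/2"
    using assms by auto
  have "\<bar>(1 + w) / (1 - w) * x - x\<bar> = 2 * \<bar>w\<bar> * \<bar>x\<bar> / (1 - w)"
    using w by (simp add: field_simps abs_mult)
  also have "\<dots> \<le> 2 * \<bar>w\<bar> * \<bar>x\<bar> / (1/2)"
    using w by (intro divide_left_mono) auto
  finally show ?thesis
    by simp
qed

lemma W_gen_snd_factor_bounds:
  fixes w y :: real
  assumes "\<bar>w\<bar> \<le> 1/2"
  shows "2/3 * \<bar>w\<bar> * \<bar>y\<bar> \<le> \<bar>\<bar>w\<bar> / (1 + w) * y\<bar>"
    and "\<bar>\<bar>w\<bar> / (1 + w) * y\<bar> \<le> 2 * \<bar>w\<bar> * \<bar>y\<bar>"
proof -
  have w: "1 + w \<ge> 1/2" "1 + w \<le> 3/2"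
    using assms by auto
  then have y': "\<bar>\<bar>w\<bar> / (1 + w) * y\<bar> = \<bar>w\<bar> * \<bar>y\<bar> / (1 + w)"
    by (simp add: abs_mult)
  have "\<bar>w\<bar> * \<bar>y\<bar> / (3/2) \<le> \<bar>w\<bar> * \<bar>y\<bar> / (1 + w)"
    using w by (intro divide_left_mono) auto
  then show "2/3 * \<bar>w\<bar> * \<bar>y\<bar> \<le> \<bar>\<bar>w\<bar> / (1 + w) * y\<bar>"
    using y' by simp
  have "\<bar>w\<bar> * \<bar>y\<bar> / (1 + w) \<le> \<bar>w\<bar> * \<bar>y\<bar> / (1/2)"
    using w by (intro divide_left_mono) auto
  then show "\<bar>\<bar>w\<bar> / (1 + w) * y\<bar> \<le> 2 * \<bar>w\<bar> * \<bar>y\<bar>"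
    using y' by simp
qed

lemma W_quadratic_regime:
  assumes W: "W (x, y) = (x', y')"
    and x: "1 \<le> x" "x \<le> 3" and y: "\<bar>y\<bar> \<le> 1/100" "y \<noteq> 0"
  shows "\<bar>y'\<bar> \<le> 21 * \<bar>y\<bar>^2"
    and "\<bar>x' - x\<bar> * \<bar>x - 2\<bar> \<le> 3528 * \<bar>y\<bar>^2"
    and "\<bar>x - 2\<bar> \<le> 146 * \<bar>y\<bar> \<Longrightarrow> \<bar>y\<bar>^2 / 3600 \<le> \<bar>y'\<bar>"
proof -
  define w where "w = omega x y"
  have x': "x' = (1 + w) / (1 - w) * x" and y': "y' = \<bar>w\<bar> / (1 + w) * y"
    using W by (simp_all add: W_Pair_eq w_def)
  have w_lin: "8 * \<bar>w\<bar> \<le> 84 * \<bar>y\<bar>"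
    using abs_omega_le_linear[of x 3 y] x y by (simp add: w_def Delta_excess_3_1)
  then have "\<bar>w\<bar> \<le> 1/2"
    using y by simp
  note step_x = W_gen_fst_step_le[OF this, of x] and step_y = W_gen_snd_factor_bounds[OF this, of y]
  have "\<bar>y'\<bar> \<le> 2 * \<bar>w\<bar> * \<bar>y\<bar>"
    using step_y(2) by (simp add: y')
  also have "\<dots> \<le> 2 * (84 / 8 * \<bar>y\<bar>) * \<bar>y\<bar>"
    using w_lin by (intro mult_right_mono) auto
  finally show "\<bar>y'\<bar> \<le> 21 * \<bar>y\<bar>^2"
    by (simp add: power2_eq_square)
  have "8 * \<bar>w\<bar> * (\<bar>x - 2\<bar> * 3) \<le> 8 * \<bar>w\<bar> * \<bar>x^2 - 4\<bar>"
    unfolding abs_square_minus_4_eq using x by (intro mult_left_mono mult_mono) auto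
  also have "\<dots> \<le> 84^2 * y^2"
    using abs_omega_mult_gap_le[of x 3 y] x y by (simp add: w_def Delta_excess_3_1)
  finally have gap: "\<bar>w\<bar> * \<bar>x - 2\<bar> \<le> 294 * y^2"
    by simp
  have "4 * \<bar>w\<bar> * \<bar>x\<bar> \<le> 4 * \<bar>w\<bar> * 3"
    using x by (intro mult_left_mono) auto
  then have "\<bar>x' - x\<bar> \<le> 4 * \<bar>w\<bar> * 3"
    using step_x unfolding x' by linarith
  then have "\<bar>x' - x\<bar> * \<bar>x - 2\<bar> \<le> (4 * \<bar>w\<bar> * 3) * \<bar>x - 2\<bar>"
    by (intro mult_right_mono) auto
  also have "\<dots> \<le> 3528 * \<bar>y\<bar>^2"
    using gap by simp
  finally show "\<bar>x' - x\<bar> * \<bar>x - 2\<bar> \<le> 3528 * \<bar>y\<bar>^2" .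
  assume "\<bar>x - 2\<bar> \<le> 146 * \<bar>y\<bar>"
  then have "\<bar>y\<bar> / 2400 \<le> \<bar>w\<bar>"
    using abs_omega_ge_linear_near_2[OF x] y by (simp add: w_def)
  then have "\<bar>y\<bar>^2 / 3600 \<le> 2/3 * \<bar>w\<bar> * \<bar>y\<bar>"
    using mult_right_mono[of "\<bar>y\<bar> / 2400" "\<bar>w\<bar>" "\<bar>y\<bar>"] by (simp add: power2_eq_square)
  also have "\<dots> \<le> \<bar>y'\<bar>"
    using step_y(1) by (simp add: y')
  finally show "\<bar>y\<bar>^2 / 3600 \<le> \<bar>y'\<bar>" .
qed

lemma W_cubic_regime:
  assumes W: "W (x, y) = (x', y')"
    and x: "0 < m" "m \<le> x" "x \<le> M" and gap: "0 < g" "g \<le> \<bar>x - 2\<bar>"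
    and y: "\<bar>y\<bar> \<le> 1" "Delta_excess M 1 * y^2 \<le> 8 * g"
  shows "64 * m^2 / (3 * (4 + 5 * M^2) * (2 * (M^2 + 4) + sqrt (Delta_excess M 1))) * \<bar>y\<bar>^3 \<le> \<bar>y'\<bar>"
    and "\<bar>y'\<bar> \<le> Delta_excess M 1 / (8 * g) * \<bar>y\<bar>^3"
proof -
  define w where "w = omega x y"
  define E where "E = Delta_excess M 1"
  have y': "y' = \<bar>w\<bar> / (1 + w) * y"
    using W by (simp add: W_Pair_eq w_def)
  have w_quad: "\<bar>w\<bar> \<le> E * y^2 / (16 * g)"
    using abs_omega_le_quadratic[of x M g y] x gap y by (simp add: w_def E_def)
  also have "\<dots> \<le> 1/2"
    using y gap by (simp add: E_def field_simps)
  finally have "\<bar>w\<bar> \<le> 1/2" .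
  note step_y = W_gen_snd_factor_bounds[OF this, of y]
  have "\<bar>y'\<bar> \<le> 2 * \<bar>w\<bar> * \<bar>y\<bar>"
    using step_y(2) by (simp add: y')
  also have "\<dots> \<le> 2 * (E * y^2 / (16 * g)) * \<bar>y\<bar>"
    using w_quad by (intro mult_right_mono) auto
  finally show "\<bar>y'\<bar> \<le> Delta_excess M 1 / (8 * g) * \<bar>y\<bar>^3"
    using gap by (simp add: E_def power2_eq_square power3_eq_cube field_simps)
  define A where "A = 4 + 5 * M^2"
  define Z where "Z = 2 * (M^2 + 4) + sqrt E"
  have "A > 0" "Z > 0"
    unfolding A_def Z_def E_def using Delta_excess_nonneg
    by (intro add_pos_nonneg; simp add: add_nonneg_pos)+
  have "64 * m^2 * \<bar>y\<bar>^2 / (2 * A * Z) \<le> \<bar>w\<bar>"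
    using abs_omega_ge_quadratic[OF x y(1)] \<open>A > 0\<close> \<open>Z > 0\<close>
    by (simp add: w_def A_def Z_def E_def pos_divide_le_eq mult_ac)
  then have "2/3 * (64 * m^2 * \<bar>y\<bar>^2 / (2 * A * Z)) * \<bar>y\<bar> \<le> 2/3 * \<bar>w\<bar> * \<bar>y\<bar>"
    by (intro mult_right_mono mult_left_mono) auto
  moreover have "2/3 * (64 * m^2 * \<bar>y\<bar>^2 / (2 * A * Z)) * \<bar>y\<bar> = 64 * m^2 / (3 * A * Z) * \<bar>y\<bar>^3"
    by (simp add: power3_eq_cube power2_eq_square mult.assoc)
  moreover have "2/3 * \<bar>w\<bar> * \<bar>y\<bar> \<le> \<bar>y'\<bar>"
    using step_y(1) by (simp add: y')
  ultimately have "64 * m^2 / (3 * A * Z) * \<bar>y\<bar>^3 \<le> \<bar>y'\<bar>"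
    by linarith
  then show "64 * m^2 / (3 * (4 + 5 * M^2) * (2 * (M^2 + 4) + sqrt (Delta_excess M 1))) * \<bar>y\<bar>^3
      \<le> \<bar>y'\<bar>"
    by (simp only: A_def Z_def E_def)
qed

lemma uniform_power_bounds_if_eventually:
  fixes y :: "nat \<Rightarrow> real"
  assumes nonzero: "\<And>k. y k \<noteq> 0"
    and ev: "\<forall>\<^sub>F k in sequentially. c0 * \<bar>y k\<bar>^p \<le> \<bar>y (Suc k)\<bar> \<and> \<bar>y (Suc k)\<bar> \<le> C0 * \<bar>y k\<bar>^p"
    and "c0 > 0" "C0 > 0"
  shows "\<exists>c C. c > 0 \<and> C > 0 \<and> (\<forall>k. c * \<bar>y k\<bar>^p \<le> \<bar>y (Suc k)\<bar> \<and> \<bar>y (Suc k)\<bar> \<le> C * \<bar>y k\<bar>^p)"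
proof -
  obtain N where N: "\<And>k. k \<ge> N \<Longrightarrow> c0 * \<bar>y k\<bar>^p \<le> \<bar>y (Suc k)\<bar> \<and> \<bar>y (Suc k)\<bar> \<le> C0 * \<bar>y k\<bar>^p"
    using ev by (auto simp: eventually_sequentially)
  define ratio where "ratio k = \<bar>y (Suc k)\<bar> / \<bar>y k\<bar>^p" for k
  define c where "c = Min (insert c0 (ratio ` {..<N}))"
  define C where "C = Max (insert C0 (ratio ` {..<N}))"
  have "c > 0"
    unfolding c_def using \<open>c0 > 0\<close> nonzero by (subst Min_gr_iff) (auto simp: ratio_def)
  have "C0 \<le> C" "c \<le> c0"
    unfolding C_def c_def by (auto intro: Max_ge Min_le)
  have "c * \<bar>y k\<bar>^p \<le> \<bar>y (Suc k)\<bar> \<and> \<bar>y (Suc k)\<bar> \<le> C * \<bar>y k\<bar>^p" for k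
  proof (cases "k < N")
    case True
    then have "c \<le> ratio k" "ratio k \<le> C"
      unfolding c_def C_def by (auto intro: Min_le Max_ge)
    then show ?thesis
      using nonzero[of k] by (simp add: ratio_def field_simps)
  next
    case False
    have "c * \<bar>y k\<bar>^p \<le> c0 * \<bar>y k\<bar>^p" "C0 * \<bar>y k\<bar>^p \<le> C * \<bar>y k\<bar>^p"
      using \<open>C0 \<le> C\<close> \<open>c \<le> c0\<close> by (intro mult_right_mono; simp)+
    with N[of k] False show ?thesis
      by linarith
  qed
  with \<open>c > 0\<close> \<open>C0 \<le> C\<close> \<open>C0 > 0\<close> show ?thesis
    by (intro exI[of _ c] exI[of _ C]) auto
qed

lemma dist_potential_mono:
  fixes a B \<delta> x x' y y' :: real
  assumes y': "\<bar>y'\<bar> \<le> \<bar>y\<bar> / 2" and x': "\<bar>x' - x\<bar> * \<bar>x - a\<bar> \<le> B * y^2"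
    and "0 \<le> B" "0 < \<delta>" and far: "\<delta> / 2 \<le> \<bar>x - a\<bar> - 3 * B * (y^2 / \<delta>)"
  shows "\<bar>x - a\<bar> - 3 * B * (y^2 / \<delta>) \<le> \<bar>x' - a\<bar> - 3 * B * (y'^2 / \<delta>)"
proof -
  define u where "u = y^2 / \<delta>"
  have "u \<ge> 0"
    using \<open>0 < \<delta>\<close> by (simp add: u_def)
  have "\<bar>y'\<bar>^2 \<le> (\<bar>y\<bar> / 2)^2"
    using y' by (intro power_mono) auto
  then have "y'^2 / \<delta> \<le> u / 4"
    using \<open>0 < \<delta>\<close> by (simp add: u_def power_divide field_simps)
  then have decay: "3 * B * (y'^2 / \<delta>) \<le> 3 * B * (u / 4)"
    using \<open>0 \<le> B\<close> by (intro mult_left_mono) auto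
  have "3 * B * u \<ge> 0"
    using \<open>0 \<le> B\<close> \<open>u \<ge> 0\<close> by simp
  then have "\<delta> / 2 \<le> \<bar>x - a\<bar>"
    using far by (simp add: u_def)
  then have "\<bar>x' - x\<bar> * (\<delta> / 2) \<le> \<bar>x' - x\<bar> * \<bar>x - a\<bar>"
    by (intro mult_left_mono) auto
  also have "\<dots> \<le> B * y^2"
    by (rule x')
  finally have "\<bar>x' - x\<bar> \<le> 2 * B * u"
    using \<open>0 < \<delta>\<close> by (simp add: u_def field_simps)
  moreover have "\<bar>x - a\<bar> \<le> \<bar>x' - a\<bar> + \<bar>x' - x\<bar>"
    by linarith
  ultimately show ?thesis
    using decay \<open>0 \<le> B\<close> \<open>u \<ge> 0\<close> unfolding u_def[symmetric] by linarith
qed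

lemma dist_potential_stays_large:
  fixes x y :: "nat \<Rightarrow> real"
  assumes steps: "\<And>j. k \<le> j \<Longrightarrow> \<bar>y (Suc j)\<bar> \<le> \<bar>y j\<bar> / 2 \<and>
      \<bar>x (Suc j) - x j\<bar> * \<bar>x j - a\<bar> \<le> B * (y j)^2"
    and "0 \<le> B" "0 \<le> K" "6 * B \<le> K^2" and far: "K * \<bar>y k\<bar> < \<bar>x k - a\<bar>"
    and "k \<le> j"
  shows "\<bar>x k - a\<bar> / 2 \<le> \<bar>x j - a\<bar> - 3 * B * ((y j)^2 / \<bar>x k - a\<bar>)"
  using \<open>k \<le> j\<close>
proof (induction j rule: dec_induct)
  case base
  have "0 \<le> K * \<bar>y k\<bar>"
    using \<open>0 \<le> K\<close> by simp
  have "6 * B * (y k)^2 \<le> K^2 * (y k)^2"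
    using \<open>6 * B \<le> K^2\<close> by (intro mult_right_mono) auto
  also have "\<dots> = (K * \<bar>y k\<bar>)^2"
    by (simp add: power_mult_distrib)
  also have "\<dots> \<le> \<bar>x k - a\<bar>^2"
    using far \<open>0 \<le> K * \<bar>y k\<bar>\<close> by (intro power_mono) auto
  finally show ?case
    using far \<open>0 \<le> K * \<bar>y k\<bar>\<close> by (simp add: field_simps power2_eq_square)
next
  case (step j)
  have "0 < \<bar>x k - a\<bar>"
    using far mult_nonneg_nonneg[OF \<open>0 \<le> K\<close> abs_ge_zero[of "y k"]] by linarith
  then have "\<bar>x j - a\<bar> - 3 * B * ((y j)^2 / \<bar>x k - a\<bar>)
      \<le> \<bar>x (Suc j) - a\<bar> - 3 * B * ((y (Suc j))^2 / \<bar>x k - a\<bar>)"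
    using steps[OF step.hyps(1)] step.IH \<open>0 \<le> B\<close> by (intro dist_potential_mono) auto
  with step.IH show ?case
    by linarith
qed

text \<open>If \<open>x\<^sub>k\<close> were much farther from its limit than \<open>\<bar>y\<^sub>k\<bar>\<close>, the potential
  \<open>\<bar>x\<^sub>j - a\<bar> - 3B y\<^sub>j\<^sup>2/\<delta>\<close> (with \<open>\<delta> = \<bar>x\<^sub>k - a\<bar>\<close>) would stay above \<open>\<delta>/2\<close> for all
  \<open>j \<ge> k\<close>: each step of \<open>x\<close> is paid for by the geometric decay of \<open>y\<close>.\<close>
lemma eventually_dist_limit_le_linear:
  fixes x y :: "nat \<Rightarrow> real"
  assumes lim: "x \<longlonglongrightarrow> a"
    and ev: "\<forall>\<^sub>F k in sequentially. \<bar>y (Suc k)\<bar> \<le> \<bar>y k\<bar> / 2 \<and>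
      \<bar>x (Suc k) - x k\<bar> * \<bar>x k - a\<bar> \<le> B * (y k)^2"
    and "0 \<le> B" "0 \<le> K" "6 * B \<le> K^2"
  shows "\<forall>\<^sub>F k in sequentially. \<bar>x k - a\<bar> \<le> K * \<bar>y k\<bar>"
proof -
  obtain N where N: "\<And>k. N \<le> k \<Longrightarrow> \<bar>y (Suc k)\<bar> \<le> \<bar>y k\<bar> / 2 \<and>
      \<bar>x (Suc k) - x k\<bar> * \<bar>x k - a\<bar> \<le> B * (y k)^2"
    using ev by (auto simp: eventually_sequentially)
  have "\<bar>x k - a\<bar> \<le> K * \<bar>y k\<bar>" if "N \<le> k" for k
  proof (rule ccontr)
    define \<delta> where "\<delta> = \<bar>x k - a\<bar>"
    assume "\<not> \<bar>x k - a\<bar> \<le> K * \<bar>y k\<bar>"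
    then have far: "K * \<bar>y k\<bar> < \<bar>x k - a\<bar>"
      by simp
    then have "\<delta> > 0"
      using mult_nonneg_nonneg[OF \<open>0 \<le> K\<close> abs_ge_zero[of "y k"]] unfolding \<delta>_def by linarith
    obtain N' where N': "\<And>j. N' \<le> j \<Longrightarrow> \<bar>x j - a\<bar> < \<delta> / 2"
      using LIMSEQ_D[OF lim, of "\<delta> / 2"] \<open>\<delta> > 0\<close> by auto
    define j where "j = max k N'"
    have "\<delta> / 2 \<le> \<bar>x j - a\<bar> - 3 * B * ((y j)^2 / \<delta>)"
      unfolding \<delta>_def using N \<open>N \<le> k\<close> \<open>0 \<le> B\<close> \<open>0 \<le> K\<close> \<open>6 * B \<le> K^2\<close> far
      by (intro dist_potential_stays_large) (auto simp: j_def)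
    moreover have "\<bar>x j - a\<bar> < \<delta> / 2"
      by (rule N') (simp add: j_def)
    moreover have "0 \<le> 3 * B * ((y j)^2 / \<delta>)"
      using \<open>0 \<le> B\<close> \<open>\<delta> > 0\<close> by simp
    ultimately show False
      by linarith
  qed
  then show ?thesis
    by (auto simp: eventually_sequentially)
qed

lemma W_fst_ge_if_less_2:
  assumes W: "W (x, y) = (x', y')" and "0 < x" "x < 2" "0 < x'"
  shows "x \<le> x'"
proof -
  define w where "w = omega x y"
  have x': "x' = (1 + w) / (1 - w) * x"
    using W by (simp add: W_Pair_eq w_def)
  have "w \<ge> 0"
    using omega_nonneg[OF assms(2,3)] by (simp add: w_def)
  have "(1 + w) / (1 - w) > 0"
    using \<open>0 < x'\<close> \<open>0 < x\<close> unfolding x' by (rule zero_less_mult_pos2)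
  with \<open>w \<ge> 0\<close> have "1 \<le> (1 + w) / (1 - w)"
    by (simp add: zero_less_divide_iff)
  then have "1 * x \<le> (1 + w) / (1 - w) * x"
    using \<open>0 < x\<close> by (intro mult_right_mono) auto
  then show ?thesis
    unfolding x' by simp
qed

lemma W_snd_nonzero:
  assumes W: "W (x, y) = (x', y')" and "0 < x" "0 < x'" "y \<noteq> 0"
  shows "y' \<noteq> 0"
proof -
  define w where "w = omega x y"
  have x': "x' = (1 + w) / (1 - w) * x" and y': "y' = \<bar>w\<bar> / (1 + w) * y"
    using W by (simp_all add: W_Pair_eq w_def)
  have "w \<noteq> 0"
    using abs_omega_identity[OF \<open>0 < x\<close>, of y] Delta_excess_pos[of x y] assms(2,4)
    by (auto simp: w_def)
  moreover have "1 + w \<noteq> 0"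
    using \<open>0 < x'\<close> by (auto simp: x')
  ultimately show ?thesis
    using \<open>y \<noteq> 0\<close> by (simp add: y')
qed

locale W_trajectory =
  fixes x y :: "nat \<Rightarrow> real"
  assumes W_step: "\<And>k. W (x k, y k) = (x (Suc k), y (Suc k))"
    and x_pos: "\<And>k. 0 < x k"
    and y_nonzero: "\<And>k. y k \<noteq> 0"
begin

text \<open>Left of \<open>x = 2\<close> the first coordinate increases, so it cannot tend to \<open>0\<close>.\<close>
lemma limit_pos:
  assumes "x \<longlonglongrightarrow> a"
  shows "0 < a"
proof (rule ccontr)
  assume "\<not> 0 < a"
  then obtain N where N: "\<And>k. N \<le> k \<Longrightarrow> x k < 2"
    using order_tendstoD(2)[OF assms, of 2] by (auto simp: eventually_sequentially)
  have "x N \<le> x k" if "N \<le> k" for k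
    using that
  proof (induction k rule: dec_induct)
    case (step k)
    then show ?case
      using W_fst_ge_if_less_2[OF W_step x_pos N x_pos] by (meson order_trans)
  qed simp
  then have "x N \<le> a"
    by (intro LIMSEQ_le_const[OF assms]) auto
  with x_pos[of N] \<open>\<not> 0 < a\<close> show False
    by simp
qed

lemma cubic_convergence:
  assumes "x \<longlonglongrightarrow> a" "y \<longlonglongrightarrow> 0" "a \<noteq> 2"
  shows "\<exists>c C. c > 0 \<and> C > 0 \<and>
    (\<forall>k. c * \<bar>y k\<bar>^3 \<le> \<bar>y (Suc k)\<bar> \<and> \<bar>y (Suc k)\<bar> \<le> C * \<bar>y k\<bar>^3)"
proof -
  have "0 < a"
    using limit_pos[OF assms(1)] .
  define m M g where "m = a / 2" and "M = a + 1" and "g = \<bar>a - 2\<bar> / 2"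
  define E where "E = Delta_excess M 1"
  have "0 < m" "0 < M" "0 < g"
    using \<open>0 < a\<close> \<open>a \<noteq> 2\<close> by (simp_all add: m_def M_def g_def)
  have "E > 0"
    using Delta_excess_pos[of M 1] \<open>0 < M\<close> by (simp add: E_def)
  have "(\<lambda>k. \<bar>x k - 2\<bar>) \<longlonglongrightarrow> \<bar>a - 2\<bar>"
    by (intro tendsto_rabs tendsto_diff assms(1) tendsto_const)
  moreover have "(\<lambda>k. \<bar>y k\<bar>) \<longlonglongrightarrow> 0"
    using tendsto_rabs_zero[OF assms(2)] .
  moreover have "(\<lambda>k. E * (y k)^2) \<longlonglongrightarrow> 0"
    using tendsto_mult_left[OF tendsto_power[OF assms(2)], of E 2] by simp
  ultimately have "\<forall>\<^sub>F k in sequentially.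
      m < x k \<and> x k < M \<and> g < \<bar>x k - 2\<bar> \<and> \<bar>y k\<bar> < 1 \<and> E * (y k)^2 < 8 * g"
    using assms(1) \<open>0 < a\<close> \<open>0 < g\<close>
    by (intro eventually_conj order_tendstoD) (auto simp: m_def M_def g_def)
  then have "\<forall>\<^sub>F k in sequentially.
      64 * m^2 / (3 * (4 + 5 * M^2) * (2 * (M^2 + 4) + sqrt E)) * \<bar>y k\<bar>^3 \<le> \<bar>y (Suc k)\<bar> \<and>
      \<bar>y (Suc k)\<bar> \<le> E / (8 * g) * \<bar>y k\<bar>^3"
    by eventually_elim (use W_cubic_regime[OF W_step] \<open>0 < m\<close> \<open>0 < g\<close> in \<open>simp add: E_def\<close>)
  moreover have "0 < 64 * m^2 / (3 * (4 + 5 * M^2) * (2 * (M^2 + 4) + sqrt E))"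
    using \<open>0 < m\<close> \<open>0 < M\<close> \<open>0 < E\<close> by (intro divide_pos_pos mult_pos_pos add_pos_pos) auto
  moreover have "0 < E / (8 * g)"
    using \<open>0 < E\<close> \<open>0 < g\<close> by simp
  ultimately show ?thesis
    by (rule uniform_power_bounds_if_eventually[OF y_nonzero])
qed

lemma quadratic_convergence:
  assumes "x \<longlonglongrightarrow> 2" "y \<longlonglongrightarrow> 0"
  shows "\<exists>c C. c > 0 \<and> C > 0 \<and>
    (\<forall>k. c * \<bar>y k\<bar>^2 \<le> \<bar>y (Suc k)\<bar> \<and> \<bar>y (Suc k)\<bar> \<le> C * \<bar>y k\<bar>^2)"
proof -
  have "(\<lambda>k. \<bar>y k\<bar>) \<longlonglongrightarrow> 0"
    using tendsto_rabs_zero[OF assms(2)] .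
  then have "\<forall>\<^sub>F k in sequentially. \<bar>y k\<bar> < 1/100"
    by (rule order_tendstoD) simp
  moreover have "\<forall>\<^sub>F k in sequentially. 1 < x k" "\<forall>\<^sub>F k in sequentially. x k < 3"
    using assms(1) by (auto elim!: order_tendstoD)
  ultimately have regime: "\<forall>\<^sub>F k in sequentially. 1 < x k \<and> x k < 3 \<and> \<bar>y k\<bar> < 1/100"
    by (intro eventually_conj)
  then have "\<forall>\<^sub>F k in sequentially. \<bar>y (Suc k)\<bar> \<le> \<bar>y k\<bar> / 2 \<and>
      \<bar>x (Suc k) - x k\<bar> * \<bar>x k - 2\<bar> \<le> 3528 * (y k)^2"
  proof eventually_elim
    case (elim k)
    note bounds = W_quadratic_regime[OF W_step, of k] elim y_nonzero[of k]
    have "\<bar>y k\<bar> * \<bar>y k\<bar> \<le> 1/100 * \<bar>y k\<bar>"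
      using elim by (intro mult_right_mono) auto
    then have "21 * \<bar>y k\<bar>^2 \<le> \<bar>y k\<bar> / 2"
      by (simp add: power2_eq_square)
    then show ?case
      using bounds by auto
  qed
  then have "\<forall>\<^sub>F k in sequentially. \<bar>x k - 2\<bar> \<le> 146 * \<bar>y k\<bar>"
    by (rule eventually_dist_limit_le_linear[OF assms(1)]) auto
  with regime have "\<forall>\<^sub>F k in sequentially.
      1/3600 * \<bar>y k\<bar>^2 \<le> \<bar>y (Suc k)\<bar> \<and> \<bar>y (Suc k)\<bar> \<le> 21 * \<bar>y k\<bar>^2"
    by eventually_elim (use W_quadratic_regime[OF W_step] y_nonzero in auto)
  then show ?thesis
    by (rule uniform_power_bounds_if_eventually[OF y_nonzero]) simp_all
qed

end

lemma W_trajectory_orbit: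
  assumes "snd z0 \<noteq> 0" "orbit_defined z0"
  shows "W_trajectory (\<lambda>k. fst (W_orbit z0 k)) (\<lambda>k. snd (W_orbit z0 k))"
proof -
  have step: "W (fst (W_orbit z0 k), snd (W_orbit z0 k)) = (fst (W_orbit z0 (Suc k)), snd (W_orbit z0 (Suc k)))" for k
    by (simp add: W_orbit_def)
  have pos: "0 < fst (W_orbit z0 k)" for k
  proof -
    have "W_orbit z0 k \<in> regionR"
      using assms(2) by (simp add: orbit_defined_def W_domain_def)
    then show ?thesis
      by (cases "W_orbit z0 k") (simp add: regionR_def)
  qed
  have "snd (W_orbit z0 k) \<noteq> 0" for k
  proof (induction k)
    case 0
    then show ?case
      using assms(1) by (simp add: W_orbit_def)
  next
    case (Suc k)
    then show ?case
      using W_snd_nonzero[OF step pos pos] by simp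
  qed
  with step pos show ?thesis
    by unfold_locales
qed

theorem proposition5p5:
  shows
  "(\<forall>z0 :: real \<times> real.
      snd z0 \<noteq> 0 \<and> orbit_defined z0 \<and> W_orbit z0 \<longlonglongrightarrow> p0 \<longrightarrow>
      (\<exists>c C. c > 0 \<and> C > 0 \<and>
        (\<forall>k. c * \<bar>snd (W_orbit z0 k)\<bar>^2 \<le> \<bar>snd (W_orbit z0 (Suc k))\<bar> \<and>
             \<bar>snd (W_orbit z0 (Suc k))\<bar> \<le> C * \<bar>snd (W_orbit z0 k)\<bar>^2)))
   \<and>
   (\<forall>(z0 :: real \<times> real) (xs :: real).
      z0 \<in> regionR \<and> snd z0 \<noteq> 0 \<and> orbit_defined z0 \<and> xs \<noteq> 2 \<and>
      W_orbit z0 \<longlonglongrightarrow> (xs, 0) \<longrightarrow>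
      (\<exists>c C. c > 0 \<and> C > 0 \<and>
        (\<forall>k. c * \<bar>snd (W_orbit z0 k)\<bar>^3 \<le> \<bar>snd (W_orbit z0 (Suc k))\<bar> \<and>
             \<bar>snd (W_orbit z0 (Suc k))\<bar> \<le> C * \<bar>snd (W_orbit z0 k)\<bar>^3)))"
proof (intro conjI allI impI)
  fix z0 :: "real \<times> real"
  assume "snd z0 \<noteq> 0 \<and> orbit_defined z0 \<and> W_orbit z0 \<longlonglongrightarrow> p0"
  then have "snd z0 \<noteq> 0" "orbit_defined z0" and lim: "W_orbit z0 \<longlonglongrightarrow> (2, 0)"
    by (simp_all add: p0_def)
  interpret W_trajectory "\<lambda>k. fst (W_orbit z0 k)" "\<lambda>k. snd (W_orbit z0 k)"
    using \<open>snd z0 \<noteq> 0\<close> \<open>orbit_defined z0\<close> by (rule W_trajectory_orbit)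
  show "\<exists>c C. c > 0 \<and> C > 0 \<and>
      (\<forall>k. c * \<bar>snd (W_orbit z0 k)\<bar>^2 \<le> \<bar>snd (W_orbit z0 (Suc k))\<bar> \<and>
           \<bar>snd (W_orbit z0 (Suc k))\<bar> \<le> C * \<bar>snd (W_orbit z0 k)\<bar>^2)"
    using quadratic_convergence tendsto_fst[OF lim] tendsto_snd[OF lim] by simp
next
  fix z0 :: "real \<times> real" and xs :: real
  assume "z0 \<in> regionR \<and> snd z0 \<noteq> 0 \<and> orbit_defined z0 \<and> xs \<noteq> 2 \<and> W_orbit z0 \<longlonglongrightarrow> (xs, 0)"
  then have "snd z0 \<noteq> 0" "orbit_defined z0" "xs \<noteq> 2" and lim: "W_orbit z0 \<longlonglongrightarrow> (xs, 0)"
    by simp_all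
  interpret W_trajectory "\<lambda>k. fst (W_orbit z0 k)" "\<lambda>k. snd (W_orbit z0 k)"
    using \<open>snd z0 \<noteq> 0\<close> \<open>orbit_defined z0\<close> by (rule W_trajectory_orbit)
  show "\<exists>c C. c > 0 \<and> C > 0 \<and>
      (\<forall>k. c * \<bar>snd (W_orbit z0 k)\<bar>^3 \<le> \<bar>snd (W_orbit z0 (Suc k))\<bar> \<and>
           \<bar>snd (W_orbit z0 (Suc k))\<bar> \<le> C * \<bar>snd (W_orbit z0 k)\<bar>^3)"
    using cubic_convergence[OF _ _ \<open>xs \<noteq> 2\<close>] tendsto_fst[OF lim] tendsto_snd[OF lim] by simp
qed

end
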